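(* Let $S$ be a semigroup and $p$ a congruence on $S$. If $\{S_k : k\in K\}$ is a family of congruence classes of $S$ modulo $p$ and $U=\bigcup_{k\in K}S_k$, then $\mathrm{Sep}\,U$ is either empty or a union of some congruence classes of $S$ modulo $p$.
   Context: For a semigroup $S$ and a subset $A\subseteq S$, the idealizer of $A$ is $\mathrm{Id}\,A=\{x\in S:\ xA\subseteq A,\ Ax\subseteq A\}$, and the separator of $A$ is $\mathrm{Sep}\,A=\mathrm{Id}\,A\cap \mathrm{Id}(S\setminus A)$, i.e. the set of all $x\in S$ with $xA\subseteq A$, $Ax\subseteq A$, $x(S\setminus A)\subseteq S\setminus A$ and $(S\setminus A)x\subseteq S\setminus A$. *)

theory Defs
  imports Main
begin

text \<open>The semigroup S is the carrier of a type of class semigroup_mult (S = UNIV).\<close>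

definition idealizer :: "'a::semigroup_mult set \<Rightarrow> 'a set" where
  "idealizer A = {x. (\<forall>a\<in>A. x * a \<in> A) \<and> (\<forall>a\<in>A. a * x \<in> A)}"

definition separator :: "'a::semigroup_mult set \<Rightarrow> 'a set" where
  "separator A = idealizer A \<inter> idealizer (- A)"

definition semigroup_congruence :: "('a::semigroup_mult \<times> 'a) set \<Rightarrow> bool" where
  "semigroup_congruence p \<longleftrightarrow> equiv UNIV p \<and>
     (\<forall>a b c. (a, b) \<in> p \<longrightarrow> (c * a, c * b) \<in> p \<and> (a * c, b * c) \<in> p)"

end

theory Submission
  imports Defs
begin

text \<open>A union of congruence classes is saturated (closed under the congruence). The four
  conditions putting x into Sep U transfer to every y congruent to x: x * a and y * a are
  congruent, so one lies in the saturated set U (or in its complement) iff the other does.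
  Hence Sep U is saturated, and a saturated set is the union of the classes of its elements
  (the empty case being the empty union).\<close>

definition saturated :: "('a \<times> 'a) set \<Rightarrow> 'a set \<Rightarrow> bool" where
  "saturated p A \<longleftrightarrow> (\<forall>a b. (a, b) \<in> p \<longrightarrow> a \<in> A \<longrightarrow> b \<in> A)"

lemma saturated_quotient_Union:
  assumes "equiv X p" and "\<forall>C\<in>CC. C \<in> X // p"
  shows "saturated p (\<Union>CC)"
  unfolding saturated_def
proof (intro allI impI)
  fix a b assume ab: "(a, b) \<in> p" and "a \<in> \<Union>CC"
  then obtain C where "C \<in> CC" "a \<in> C" by blast
  with assms(2) obtain z where "C = p `` {z}" by (auto elim!: quotientE)
  with \<open>a \<in> C\<close> ab assms(1) have "b \<in> C" unfolding equiv_def trans_def by blast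
  with \<open>C \<in> CC\<close> show "b \<in> \<Union>CC" by blast
qed

lemma saturated_Compl:
  assumes "sym p" and "saturated p A"
  shows "saturated p (- A)"
  using assms unfolding saturated_def sym_def by blast

lemma saturated_idealizer:
  assumes "semigroup_congruence p" and "saturated p A"
  shows "saturated p (idealizer A)"
  using assms unfolding saturated_def semigroup_congruence_def idealizer_def by blast

lemma saturated_separator:
  assumes "semigroup_congruence p" and "saturated p A"
  shows "saturated p (separator A)"
proof -
  have "sym p" using assms(1) unfolding semigroup_congruence_def equiv_def by blast
  then have "saturated p (- A)" using assms(2) by (rule saturated_Compl)
  then show ?thesis
    using assms saturated_idealizer unfolding separator_def saturated_def by blast
qed

lemma saturated_eq_Union_classes:
  assumes "equiv UNIV p" and "saturated p A"
  shows "A = \<Union>((\<lambda>x. p `` {x}) ` A)"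
  using assms unfolding saturated_def equiv_def refl_on_def by blast

theorem theorem1:
  fixes p :: "('a::semigroup_mult \<times> 'a) set"
    and Sk :: "'k \<Rightarrow> 'a set" and K :: "'k set" and U :: "'a set"
  assumes "semigroup_congruence p"
    and "\<forall>k\<in>K. Sk k \<in> UNIV // p"
    and "U = (\<Union>k\<in>K. Sk k)"
  shows "separator U = {} \<or> (\<exists>C. C \<subseteq> UNIV // p \<and> separator U = \<Union>C)"
proof -
  have equiv: "equiv UNIV p" using assms(1) unfolding semigroup_congruence_def by blast
  have "saturated p U"
    using saturated_quotient_Union[OF equiv, of "Sk ` K"] assms(2,3) by auto
  then have "saturated p (separator U)" using assms(1) saturated_separator by blast
  with equiv have "separator U = \<Union>((\<lambda>x. p `` {x}) ` separator U)"
    by (rule saturated_eq_Union_classes)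
  moreover have "(\<lambda>x. p `` {x}) ` separator U \<subseteq> UNIV // p" by (auto intro: quotientI)
  ultimately show ?thesis by blast
qed

end
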